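(* Let $G$ be a graph, $v$ a vertex of $G$, and let $G^v$ be the graph obtained from $G$ by adding a new vertex $v'$ with $N(v')=N(v)$. Then $G\in$ CBU if and only if $G^v\in$ CBU. Furthermore, if $G$ belongs to $d$-CBU then $G^v$ belongs to $(d+1)$-CBU.
   Context: Let $e_1,\ldots,e_d$ be the standard basis of $\mathbb{R}^d$. For $d\ge 1$, a graph belongs to $d$-CBU if one can assign to each vertex an axis-parallel box (product of $d$ closed intervals of positive length) in $\mathbb{R}^d$ such that the boxes have pairwise disjoint interiors, two distinct vertices are adjacent iff their boxes intersect, and any two intersecting boxes intersect in a $(d-1)$-dimensional box orthogonal to $e_1$. CBU is the union of the classes $d$-CBU over all $d\ge1$. *)

theory Defs
  imports Complex_Main
begin

text \<open>Points of R^d are modelled as functions nat => real that vanish at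
coordinates >= d; coordinate 0 corresponds to the basis vector e_1.\<close>

definition box_set :: "nat \<Rightarrow> (nat \<Rightarrow> real) \<Rightarrow> (nat \<Rightarrow> real) \<Rightarrow> (nat \<Rightarrow> real) set" where
  "box_set d lo hi = {x. (\<forall>i<d. lo i \<le> x i \<and> x i \<le> hi i) \<and> (\<forall>i\<ge>d. x i = 0)}"

definition box_interior :: "nat \<Rightarrow> (nat \<Rightarrow> real) \<Rightarrow> (nat \<Rightarrow> real) \<Rightarrow> (nat \<Rightarrow> real) set" where
  "box_interior d lo hi = {x. (\<forall>i<d. lo i < x i \<and> x i < hi i) \<and> (\<forall>i\<ge>d. x i = 0)}"

definition orth_facet :: "nat \<Rightarrow> (nat \<Rightarrow> real) set \<Rightarrow> bool" where
  "orth_facet d S \<longleftrightarrow> (\<exists>c a b. (\<forall>i. 1 \<le> i \<and> i < d \<longrightarrow> a i < b i) \<and>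
     S = {x. x 0 = c \<and> (\<forall>i. 1 \<le> i \<and> i < d \<longrightarrow> a i \<le> x i \<and> x i \<le> b i) \<and> (\<forall>i\<ge>d. x i = 0)})"

definition dCBU :: "nat \<Rightarrow> 'a set \<Rightarrow> ('a \<Rightarrow> 'a \<Rightarrow> bool) \<Rightarrow> bool" where
  "dCBU d V E \<longleftrightarrow> 1 \<le> d \<and> (\<exists>lo hi :: 'a \<Rightarrow> nat \<Rightarrow> real.
     (\<forall>u\<in>V. \<forall>i<d. lo u i < hi u i) \<and>
     (\<forall>u\<in>V. \<forall>w\<in>V. u \<noteq> w \<longrightarrow>
        box_interior d (lo u) (hi u) \<inter> box_interior d (lo w) (hi w) = {} \<and>
        (E u w \<longleftrightarrow> box_set d (lo u) (hi u) \<inter> box_set d (lo w) (hi w) \<noteq> {}) \<and>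
        (box_set d (lo u) (hi u) \<inter> box_set d (lo w) (hi w) \<noteq> {} \<longrightarrow>
           orth_facet d (box_set d (lo u) (hi u) \<inter> box_set d (lo w) (hi w)))))"

definition CBU :: "'a set \<Rightarrow> ('a \<Rightarrow> 'a \<Rightarrow> bool) \<Rightarrow> bool" where
  "CBU V E \<longleftrightarrow> (\<exists>d\<ge>1. dCBU d V E)"

definition simple_graph :: "'a set \<Rightarrow> ('a \<Rightarrow> 'a \<Rightarrow> bool) \<Rightarrow> bool" where
  "simple_graph V E \<longleftrightarrow> finite V \<and> (\<forall>x y. E x y \<longrightarrow> x \<in> V \<and> y \<in> V \<and> x \<noteq> y \<and> E y x)"

definition add_twin :: "('a \<Rightarrow> 'a \<Rightarrow> bool) \<Rightarrow> 'a \<Rightarrow> 'a \<Rightarrow> 'a \<Rightarrow> 'a \<Rightarrow> bool" where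
  "add_twin E v v' x y =
     (if x = v' \<and> y = v' then False
      else if x = v' then E v y
      else if y = v' then E x v
      else E x y)"

end

theory Submission
  imports Defs
begin

text \<open>Given a d-CBU representation of G, add a new coordinate d: the box of v gets the extra
interval [0, 1/3], the twin v' gets the box of v times [2/3, 1], and every other vertex gets
[0, 1]. Two boxes whose new intervals overlap in an interval of positive length touch exactly
as before, with the contact facet extended by that interval; the boxes of v and v' are
separated in the new direction. Conversely, deleting the box of v' from a representation of
G^v represents G.\<close>

definition boxes_realize ::
    "nat \<Rightarrow> bool \<Rightarrow> (nat \<Rightarrow> real) \<Rightarrow> (nat \<Rightarrow> real) \<Rightarrow> (nat \<Rightarrow> real) \<Rightarrow> (nat \<Rightarrow> real) \<Rightarrow> bool" where
  "boxes_realize d adj lo1 hi1 lo2 hi2 \<longleftrightarrow>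
     box_interior d lo1 hi1 \<inter> box_interior d lo2 hi2 = {} \<and>
     (adj \<longleftrightarrow> box_set d lo1 hi1 \<inter> box_set d lo2 hi2 \<noteq> {}) \<and>
     (box_set d lo1 hi1 \<inter> box_set d lo2 hi2 \<noteq> {} \<longrightarrow>
        orth_facet d (box_set d lo1 hi1 \<inter> box_set d lo2 hi2))"

lemma dCBU_iff_boxes_realize:
  "dCBU d V E \<longleftrightarrow> 1 \<le> d \<and> (\<exists>lo hi.
     (\<forall>u\<in>V. \<forall>i<d. lo u i < hi u i) \<and>
     (\<forall>u\<in>V. \<forall>w\<in>V. u \<noteq> w \<longrightarrow> boxes_realize d (E u w) (lo u) (hi u) (lo w) (hi w)))"
  unfolding dCBU_def boxes_realize_def ..

lemma dCBU_I:
  assumes "1 \<le> d" and "\<forall>u\<in>V. \<forall>i<d. lo u i < hi u i"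
    and "\<And>u w. u \<in> V \<Longrightarrow> w \<in> V \<Longrightarrow> u \<noteq> w \<Longrightarrow>
      boxes_realize d (E u w) (lo u) (hi u) (lo w) (hi w)"
  shows "dCBU d V E"
  using assms unfolding dCBU_iff_boxes_realize by blast

lemma dCBU_induced_subgraph:
  assumes "dCBU d V' E'" and "V \<subseteq> V'" and "\<forall>x\<in>V. \<forall>y\<in>V. E x y = E' x y"
  shows "dCBU d V E"
  using assms unfolding dCBU_iff_boxes_realize by (simp add: subset_eq) blast

lemma box_set_fun_upd [simp]: "box_set d (lo(d := a)) (hi(d := b)) = box_set d lo hi"
  unfolding box_set_def by auto

lemma box_interior_fun_upd [simp]: "box_interior d (lo(d := a)) (hi(d := b)) = box_interior d lo hi"
  unfolding box_interior_def by auto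

lemma boxes_realize_fun_upd [simp]:
  "boxes_realize d adj (lo1(d := a1)) (hi1(d := b1)) (lo2(d := a2)) (hi2(d := b2))
     = boxes_realize d adj lo1 hi1 lo2 hi2"
  unfolding boxes_realize_def by simp

lemma mem_box_set_Suc:
  "x \<in> box_set (Suc d) lo hi \<longleftrightarrow> x(d := 0) \<in> box_set d lo hi \<and> lo d \<le> x d \<and> x d \<le> hi d"
  unfolding box_set_def by (auto simp: less_Suc_eq)

lemma mem_box_interior_Suc:
  "x \<in> box_interior (Suc d) lo hi \<longleftrightarrow> x(d := 0) \<in> box_interior d lo hi \<and> lo d < x d \<and> x d < hi d"
  unfolding box_interior_def by (auto simp: less_Suc_eq)

lemma box_interior_subset_box_set: "box_interior d lo hi \<subseteq> box_set d lo hi"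
  unfolding box_interior_def box_set_def by fastforce

lemma box_set_Int:
  "box_set d lo1 hi1 \<inter> box_set d lo2 hi2
     = box_set d (\<lambda>i. max (lo1 i) (lo2 i)) (\<lambda>i. min (hi1 i) (hi2 i))"
  unfolding box_set_def by auto

lemma box_set_eq_empty_iff: "box_set d lo hi = {} \<longleftrightarrow> (\<exists>i<d. hi i < lo i)"
proof
  assume "box_set d lo hi = {}"
  then have "(\<lambda>i. if i < d then lo i else 0) \<notin> box_set d lo hi" by blast
  then show "\<exists>i<d. hi i < lo i" unfolding box_set_def by (auto simp: not_le)
qed (auto simp: box_set_def)

lemma box_set_Suc_eq_empty_iff:
  "box_set (Suc d) lo hi = {} \<longleftrightarrow> box_set d lo hi = {} \<or> hi d < lo d"
  unfolding box_set_eq_empty_iff by (auto simp: less_Suc_eq)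

lemma orth_facet_box_set_Suc:
  assumes "orth_facet d (box_set d lo hi)" and "1 \<le> d" and "lo d < hi d"
  shows "orth_facet (Suc d) (box_set (Suc d) lo hi)"
proof -
  obtain c a b where ab: "\<forall>i. 1 \<le> i \<and> i < d \<longrightarrow> a i < b i" and
    facet: "box_set d lo hi =
      {x. x 0 = c \<and> (\<forall>i. 1 \<le> i \<and> i < d \<longrightarrow> a i \<le> x i \<and> x i \<le> b i) \<and> (\<forall>i\<ge>d. x i = 0)}"
    using assms(1) unfolding orth_facet_def by blast
  have "box_set (Suc d) lo hi =
      {x. x 0 = c \<and> (\<forall>i. 1 \<le> i \<and> i < Suc d \<longrightarrow> (a(d := lo d)) i \<le> x i \<and> x i \<le> (b(d := hi d)) i)
          \<and> (\<forall>i\<ge>Suc d. x i = 0)}"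
    using assms(2)
    by (auto simp: mem_box_set_Suc facet less_Suc_eq Suc_le_eq) (metis less_imp_le_nat less_irrefl)
  moreover have "\<forall>i. 1 \<le> i \<and> i < Suc d \<longrightarrow> (a(d := lo d)) i < (b(d := hi d)) i"
    using ab assms(3) by (auto simp: less_Suc_eq)
  ultimately show ?thesis unfolding orth_facet_def by blast
qed

lemma boxes_realize_Suc_overlapping:
  assumes "boxes_realize d adj lo1 hi1 lo2 hi2" and "1 \<le> d"
    and overlap: "max (lo1 d) (lo2 d) < min (hi1 d) (hi2 d)"
  shows "boxes_realize (Suc d) adj lo1 hi1 lo2 hi2"
proof -
  let ?lo = "\<lambda>i. max (lo1 i) (lo2 i)" and ?hi = "\<lambda>i. min (hi1 i) (hi2 i)"
  have "box_interior (Suc d) lo1 hi1 \<inter> box_interior (Suc d) lo2 hi2 = {}"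
    using assms(1) unfolding boxes_realize_def by (auto simp: mem_box_interior_Suc)
  moreover have "box_set (Suc d) ?lo ?hi = {} \<longleftrightarrow> box_set d ?lo ?hi = {}"
    unfolding box_set_Suc_eq_empty_iff using overlap by auto
  moreover have "orth_facet (Suc d) (box_set (Suc d) ?lo ?hi)" if "box_set d ?lo ?hi \<noteq> {}"
    using that assms orth_facet_box_set_Suc[of d ?lo ?hi]
    unfolding boxes_realize_def box_set_Int by simp
  ultimately show ?thesis
    using assms(1) unfolding boxes_realize_def box_set_Int by blast
qed

lemma boxes_realize_Suc_separated:
  assumes "min (hi1 d) (hi2 d) < max (lo1 d) (lo2 d)"
  shows "boxes_realize (Suc d) False lo1 hi1 lo2 hi2"
proof -
  have "box_set (Suc d) lo1 hi1 \<inter> box_set (Suc d) lo2 hi2 = {}"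
    using assms unfolding box_set_Int by (simp add: box_set_Suc_eq_empty_iff)
  then show ?thesis
    using box_interior_subset_box_set unfolding boxes_realize_def by blast
qed

lemma dCBU_Suc_add_twin:
  assumes "simple_graph V E" and "v \<in> V" and "v' \<notin> V" and "dCBU d V E"
  shows "dCBU (Suc d) (insert v' V) (add_twin E v v')"
proof -
  obtain lo hi where "1 \<le> d" and pos: "\<forall>u\<in>V. \<forall>i<d. lo u i < hi u i" and
    realize: "\<forall>u\<in>V. \<forall>w\<in>V. u \<noteq> w \<longrightarrow> boxes_realize d (E u w) (lo u) (hi u) (lo w) (hi w)"
    using assms(4) unfolding dCBU_iff_boxes_realize by blast
  have "v \<noteq> v'" using assms(2,3) by blast
  define base where "base u = (if u = v' then v else u)" for u
  define L :: "'a \<Rightarrow> real" where "L u = (if u = v' then 2/3 else 0)" for u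
  define H :: "'a \<Rightarrow> real" where "H u = (if u = v then 1/3 else 1)" for u
  define lo' where "lo' u = (lo (base u))(d := L u)" for u
  define hi' where "hi' u = (hi (base u))(d := H u)" for u
  have base_in_V: "base u \<in> V" if "u \<in> insert v' V" for u
    using that assms(2) by (auto simp: base_def)
  show ?thesis
  proof (rule dCBU_I[where lo = lo' and hi = hi'])
    show "\<forall>u\<in>insert v' V. \<forall>i<Suc d. lo' u i < hi' u i"
      using pos base_in_V \<open>v \<noteq> v'\<close> by (auto simp: lo'_def hi'_def L_def H_def less_Suc_eq)
  next
    fix u w assume u: "u \<in> insert v' V" and w: "w \<in> insert v' V" and "u \<noteq> w"
    show "boxes_realize (Suc d) (add_twin E v v' u w) (lo' u) (hi' u) (lo' w) (hi' w)"
    proof (cases "base u = base w")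
      case True
      then have twins: "(u = v \<and> w = v') \<or> (u = v' \<and> w = v)"
        using u w \<open>u \<noteq> w\<close> assms(3) by (auto simp: base_def split: if_splits)
      moreover have "\<not> E v v" using assms(1) unfolding simple_graph_def by blast
      ultimately have "\<not> add_twin E v v' u w" by (auto simp: add_twin_def)
      moreover have "min (hi' u d) (hi' w d) < max (lo' u d) (lo' w d)"
        using twins \<open>v \<noteq> v'\<close> by (auto simp: lo'_def hi'_def L_def H_def)
      ultimately show ?thesis by (simp add: boxes_realize_Suc_separated)
    next
      case False
      have "add_twin E v v' u w = E (base u) (base w)"
        using \<open>u \<noteq> w\<close> by (auto simp: add_twin_def base_def)
      moreover have "boxes_realize d (E (base u) (base w)) (lo' u) (hi' u) (lo' w) (hi' w)"
        using realize base_in_V[OF u] base_in_V[OF w] False by (simp add: lo'_def hi'_def)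
      moreover have "max (lo' u d) (lo' w d) < min (hi' u d) (hi' w d)"
        using False \<open>v \<noteq> v'\<close> by (auto simp: lo'_def hi'_def L_def H_def base_def)
      ultimately show ?thesis
        using boxes_realize_Suc_overlapping \<open>1 \<le> d\<close> by simp
    qed
  qed simp
qed

theorem mainTheorem10:
  fixes V :: "'a set" and E :: "'a \<Rightarrow> 'a \<Rightarrow> bool" and v v' :: 'a
  assumes "simple_graph V E" and "v \<in> V" and "v' \<notin> V"
  shows "(CBU V E \<longleftrightarrow> CBU (insert v' V) (add_twin E v v'))
         \<and> (\<forall>d. dCBU d V E \<longrightarrow> dCBU (d + 1) (insert v' V) (add_twin E v v'))"
proof -
  have "\<forall>d. dCBU d V E \<longrightarrow> dCBU (d + 1) (insert v' V) (add_twin E v v')"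
    using dCBU_Suc_add_twin[OF assms] by simp
  moreover have "\<forall>x\<in>V. \<forall>y\<in>V. E x y = add_twin E v v' x y"
    using assms(3) by (auto simp: add_twin_def)
  then have "dCBU d V E" if "dCBU d (insert v' V) (add_twin E v v')" for d
    using dCBU_induced_subgraph[OF that] by blast
  ultimately show ?thesis
    unfolding CBU_def by (metis le_add1 order_trans)
qed

end
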